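(* Let $\mathbf Q\in\{0,1\}^{J\times K}$ be a fixed $Q$-matrix with rows $\boldsymbol q_j$, let $\mathcal E$ be an attribute hierarchy on $[K]$ with permissible set $\mathcal A=\mathcal A(\mathcal E)$, and let $\Gamma^{\mathcal A}\in\{0,1\}^{J\times|\mathcal A|}$ be given by $\Gamma^{\mathcal A}_{j,\boldsymbol\alpha}=\mathbb 1(\boldsymbol\alpha\succeq\boldsymbol q_j)$. Suppose: (A) there exist two disjoint item sets $S_1,S_2\subseteq[J]$ such that for $i=1,2$ the submatrix $\Gamma^{(S_i,\mathcal A)}$ (rows in $S_i$) has pairwise distinct columns, and $S_1,S_2$ induce the same partial order on $\mathcal A$, i.e. for all $\boldsymbol\alpha,\boldsymbol\alpha'\in\mathcal A$, $\boldsymbol\alpha\succeq_{S_1}\boldsymbol\alpha'$ iff $\boldsymbol\alpha\succeq_{S_2}\boldsymbol\alpha'$; (B) for any distinct $\boldsymbol\alpha,\boldsymbol\alpha'\in\mathcal A$ with $\boldsymbol\alpha'\succeq_{S_i}\boldsymbol\alpha$ for $i=1$ or $i=2$, there exists an item $j\notin S_1\cup S_2$ with $\Gamma^{\mathcal A}_{j,\boldsymbol\alpha}\neq\Gamma^{\mathcal A}_{j,\boldsymbol\alpha'}$; (C) no column of $\Gamma^{\mathcal A}$ equals any column of $\Gamma^{\mathcal A^c}$, where $\mathcal A^c=\{0,1\}^K\setminus\mathcal A$ and $\Gamma^{\mathcal A^c}_{j,\boldsymbol\alpha}=\mathbb 1(\boldsymbol\alpha\succeq\boldsymbol q_j)$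 for $\boldsymbol\alpha\in\mathcal A^c$. Then the LCBN-based cognitive diagnostic model with hierarchy $\mathcal E$ is strictly identifiable: for any valid parameters $(\boldsymbol\Theta,\boldsymbol t)$ and any alternative $(\bar{\mathcal E},\bar{\boldsymbol\Theta},\bar{\boldsymbol t})$ (same $\mathbf Q$) such that $\bar{\mathcal E}$ has at most $|\mathcal A(\mathcal E)|$ permissible patterns, if $\mathbb P(\mathbf R=\boldsymbol r\mid\mathcal E,\boldsymbol\Theta,\boldsymbol t)=\mathbb P(\mathbf R=\boldsymbol r\mid\bar{\mathcal E},\bar{\boldsymbol\Theta},\bar{\boldsymbol t})$ for all $\boldsymbol r\in\{0,1\}^J$, then $(\mathcal E,\boldsymbol\Theta,\boldsymbol t)=(\bar{\mathcal E},\bar{\boldsymbol\Theta},\bar{\boldsymbol t})$.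
   Context: Attribute hierarchy: a set $\mathcal E$ of prerequisite relations $k\to\ell$ on $[K]$ (all prerequisite relations, so irreflexive, acyclic, transitively closed); $\mathcal A(\mathcal E)=\{\boldsymbol\alpha\in\{0,1\}^K:\alpha_\ell=1\Rightarrow\alpha_k=1\text{ whenever }k\to\ell\in\mathcal E\}$; $\mathrm{pa}(k)=\{\ell:\ell\to k\in\mathcal E\}$. LCBN: with $\boldsymbol t\in(0,1)^K$, $p_{\boldsymbol\alpha}=\prod_{k=1}^K t_k^{\alpha_k\pi_k}(1-t_k)^{(1-\alpha_k)\pi_k}$, $\pi_k=\prod_{\ell\in\mathrm{pa}(k)}\alpha_\ell$ (empty product $1$, $0^0=1$); $p_{\boldsymbol\alpha}=0$ off $\mathcal A(\mathcal E)$. Measurement model: item parameters $\boldsymbol\Theta=(\theta_{j,\boldsymbol\alpha})_{j\in[J],\boldsymbol\alpha\in\mathcal A(\mathcal E)}$, $\theta_{j,\boldsymbol\alpha}=\mathbb P(R_j=1\mid\boldsymbol\alpha)\in(0,1)$, responses conditionally independent given $\boldsymbol\alpha$, and valid parameters satisfy: $\theta_{j,\boldsymbol\alpha}=\theta_{j,\boldsymbol\alpha'}$ whenever $\boldsymbol\alpha\succeq\boldsymbol q_j$ and $\boldsymbol\alpha'\succeq\boldsymbol q_j$, and $\theta_{j,\boldsymbol\alpha}>\theta_{j,\boldsymbol\alpha'}$ whenever $\boldsymbol\alpha\succeq\boldsymbol q_j$ and $\boldsymbol\alpha'\not\succeq\boldsymbol q_j$ ($\succeq$ is componentwise $\ge$).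 Observed distribution: $\mathbb P(\mathbf R=\boldsymbol r)=\sum_{\boldsymbol\alpha\in\mathcal A(\mathcal E)}p_{\boldsymbol\alpha}\prod_j\theta_{j,\boldsymbol\alpha}^{r_j}(1-\theta_{j,\boldsymbol\alpha})^{1-r_j}$. For $S\subseteq[J]$ and $\boldsymbol\alpha,\boldsymbol\alpha'\in\mathcal A$, $\boldsymbol\alpha\succeq_S\boldsymbol\alpha'$ means $\Gamma^{\mathcal A}_{j,\boldsymbol\alpha}\ge\Gamma^{\mathcal A}_{j,\boldsymbol\alpha'}$ for all $j\in S$. *)

theory Defs
  imports Complex_Main
begin

(* Conventions: attributes are indexed by {0..<K}, items by {0..<J}.
   An attribute pattern alpha in {0,1}^K is represented by the set of
   attributes it possesses (alpha \<subseteq> {0..<K}); likewise the row q_j of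
   the Q-matrix is the set Q j \<subseteq> {0..<K}. Then alpha \<succeq> q_j iff Q j \<subseteq> alpha.
   A response vector r in {0,1}^J is the set of correctly answered items.
   A prerequisite relation k \<rightarrow> l is the pair (k,l) \<in> E. *)

definition is_hierarchy :: "nat \<Rightarrow> (nat \<times> nat) set \<Rightarrow> bool" where
  "is_hierarchy K E \<longleftrightarrow> E \<subseteq> {0..<K} \<times> {0..<K} \<and> irrefl E \<and> acyclic E \<and> trans E"

definition perm :: "nat \<Rightarrow> (nat \<times> nat) set \<Rightarrow> nat set set" where
  "perm K E = {\<alpha>. \<alpha> \<subseteq> {0..<K} \<and> (\<forall>k l. (k, l) \<in> E \<longrightarrow> l \<in> \<alpha> \<longrightarrow> k \<in> \<alpha>)}"

definition pa :: "(nat \<times> nat) set \<Rightarrow> nat \<Rightarrow> nat set" where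
  "pa E k = {l. (l, k) \<in> E}"

definition lcbn_prob :: "nat \<Rightarrow> (nat \<times> nat) set \<Rightarrow> (nat \<Rightarrow> real) \<Rightarrow> nat set \<Rightarrow> real" where
  "lcbn_prob K E t \<alpha> =
     (if \<alpha> \<in> perm K E then
        (\<Prod>k\<in>{0..<K}. if pa E k \<subseteq> \<alpha> then (if k \<in> \<alpha> then t k else 1 - t k) else 1)
      else 0)"

definition Gam :: "(nat \<Rightarrow> nat set) \<Rightarrow> nat \<Rightarrow> nat set \<Rightarrow> bool" where
  "Gam Q j \<alpha> \<longleftrightarrow> Q j \<subseteq> \<alpha>"

definition geS :: "(nat \<Rightarrow> nat set) \<Rightarrow> nat set \<Rightarrow> nat set \<Rightarrow> nat set \<Rightarrow> bool" where
  "geS Q S \<alpha> \<alpha>' \<longleftrightarrow> (\<forall>j\<in>S. Gam Q j \<alpha>' \<longrightarrow> Gam Q j \<alpha>)"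

definition valid_t :: "nat \<Rightarrow> (nat \<Rightarrow> real) \<Rightarrow> bool" where
  "valid_t K t \<longleftrightarrow> (\<forall>k<K. 0 < t k \<and> t k < 1)"

definition valid_theta :: "nat \<Rightarrow> nat \<Rightarrow> (nat \<Rightarrow> nat set) \<Rightarrow> (nat \<times> nat) set
     \<Rightarrow> (nat \<Rightarrow> nat set \<Rightarrow> real) \<Rightarrow> bool" where
  "valid_theta J K Q E \<theta> \<longleftrightarrow>
     (\<forall>j<J. \<forall>\<alpha>\<in>perm K E. 0 < \<theta> j \<alpha> \<and> \<theta> j \<alpha> < 1) \<and>
     (\<forall>j<J. \<forall>\<alpha>\<in>perm K E. \<forall>\<alpha>'\<in>perm K E.
        Q j \<subseteq> \<alpha> \<longrightarrow> Q j \<subseteq> \<alpha>' \<longrightarrow> \<theta> j \<alpha> = \<theta> j \<alpha>') \<and>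
     (\<forall>j<J. \<forall>\<alpha>\<in>perm K E. \<forall>\<alpha>'\<in>perm K E.
        Q j \<subseteq> \<alpha> \<longrightarrow> \<not> Q j \<subseteq> \<alpha>' \<longrightarrow> \<theta> j \<alpha> > \<theta> j \<alpha>')"

definition resp_prob :: "nat \<Rightarrow> nat \<Rightarrow> (nat \<times> nat) set \<Rightarrow> (nat \<Rightarrow> nat set \<Rightarrow> real)
     \<Rightarrow> (nat \<Rightarrow> real) \<Rightarrow> nat set \<Rightarrow> real" where
  "resp_prob J K E \<theta> t r =
     (\<Sum>\<alpha>\<in>perm K E. lcbn_prob K E t \<alpha> *
        (\<Prod>j\<in>{0..<J}. if j \<in> r then \<theta> j \<alpha> else 1 - \<theta> j \<alpha>))"

end

theory Submission
  imports Defs "Jordan_Normal_Form.Determinant"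
begin

text \<open>
  Enumerate the permissible patterns of both models and subtract from every item of
  \<open>S1 \<union> S2\<close> its success probability at the full pattern. Equal response distributions give
  equal mixed moments \<open>\<Sum>\<alpha>. p \<alpha> * (\<Prod>j\<in>c. \<theta> j \<alpha> - s j)\<close> for every item set \<open>c\<close>. Indexing
  rows by the items of \<open>S1\<close> that a pattern does not master, the \<open>S1\<close>-moments form a matrix
  that is triangular for the inclusion order, hence nonsingular by (A); likewise for \<open>S2\<close>.
  The remaining items contribute commuting diagonal factors that separate the patterns by (B),
  so, as in Kruskal's uniqueness theorem for three-way decompositions, the two mixtures agree
  up to a relabelling of the latent classes. Monotonicity of \<open>\<theta>\<close> and (C) force the relabelling
  to be the identity; finally a hierarchy is determined by its permissible patterns, and
  \<open>t\<close> by the class proportions.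
\<close>

section \<open>Matrices\<close>

lemma mult_mat_diag_mult_index:
  assumes "A \<in> carrier_mat m n" "B \<in> carrier_mat n p" "i < m" "l < p"
  shows "(A * mat_diag n d * B) $$ (i, l) = (\<Sum>k\<in>{0..<n}. A $$ (i, k) * d k * B $$ (k, l))"
  using assms by (simp add: mat_diag_mult_right scalar_prod_def)

lemma det_mat_diag: "det (mat_diag n d) = (\<Prod>k\<in>{0..<n}. d k)"
proof -
  have "det (mat_diag n d) = prod_list (diag_mat (mat_diag n d))"
    by (rule det_upper_triangular) (auto simp: upper_triangular_def mat_diag_def)
  also have "diag_mat (mat_diag n d) = map d [0..<n]"
    by (auto simp: diag_mat_def mat_diag_def)
  finally show ?thesis
    by (metis distinct_upt prod.distinct_set_conv_list set_upt)
qed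

lemma det_nonzero_obtains_inverse:
  assumes "A \<in> carrier_mat n n" "det A \<noteq> (0::'a::field)"
  obtains B where "B \<in> carrier_mat n n" "A * B = 1\<^sub>m n" "B * A = 1\<^sub>m n"
  using det_non_zero_imp_unit[OF assms, of "()"] by (auto simp: Units_def ring_mat_def)

lemma mult_left_cancel_det_nonzero:
  assumes "R \<in> carrier_mat n n" "det R \<noteq> (0::'a::field)"
    and "A \<in> carrier_mat n m" "B \<in> carrier_mat n m" "R * A = R * B"
  shows "A = B"
proof -
  obtain Ri where Ri: "Ri \<in> carrier_mat n n" "Ri * R = 1\<^sub>m n"
    using det_nonzero_obtains_inverse[OF assms(1,2)] by blast
  have "A = (Ri * R) * A"
    using assms(3) Ri(2) by simp
  also have "\<dots> = (Ri * R) * B"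
    using assms Ri(1) by simp
  also have "\<dots> = B"
    using assms(4) Ri(2) by simp
  finally show ?thesis .
qed

lemma mult_right_cancel_det_nonzero:
  assumes "R \<in> carrier_mat n n" "det R \<noteq> (0::'a::field)"
    and "A \<in> carrier_mat m n" "B \<in> carrier_mat m n" "A * R = B * R"
  shows "A = B"
proof -
  obtain Ri where Ri: "Ri \<in> carrier_mat n n" "R * Ri = 1\<^sub>m n"
    using det_nonzero_obtains_inverse[OF assms(1,2)] by blast
  have "A = (A * R) * Ri"
    using assms(1,3) Ri by simp
  also have "\<dots> = (B * R) * Ri"
    using assms(5) by simp
  also have "\<dots> = B"
    using assms(1,4) Ri by simp
  finally show ?thesis .
qed

lemma det_nonzero_obtains_right_factor:
  assumes "F \<in> carrier_mat n n" "det F \<noteq> (0::'a::field)" "F' \<in> carrier_mat n n"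
  obtains P where "P \<in> carrier_mat n n" "F' = F * P"
proof -
  obtain Fi where Fi: "Fi \<in> carrier_mat n n" "F * Fi = 1\<^sub>m n"
    using det_nonzero_obtains_inverse[OF assms(1,2)] by blast
  have "F' = (F * Fi) * F'"
    using assms(3) Fi(2) by simp
  also have "\<dots> = F * (Fi * F')"
    using assms(1,3) Fi(1) by simp
  finally have "F' = F * (Fi * F')" .
  moreover have "Fi * F' \<in> carrier_mat n n"
    using Fi(1) assms(3) by simp
  ultimately show ?thesis
    using that by blast
qed

lemma det_nonzero_imp_col_nonzero:
  assumes P: "P \<in> carrier_mat n n" "det P \<noteq> (0::'a::field)" and k: "k < n"
  shows "\<exists>i<n. P $$ (i, k) \<noteq> 0"
proof (rule ccontr)
  assume zero_col: "\<not> ?thesis"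
  have "(P *\<^sub>v unit_vec n k) $ i = 0" if "i < n" for i
  proof -
    have "(P *\<^sub>v unit_vec n k) $ i = (\<Sum>l\<in>{0..<n}. P $$ (i, l) * (if l = k then 1 else 0))"
      using P k that by (simp add: scalar_prod_def)
    also have "\<dots> = (\<Sum>l\<in>{0..<n}. if l = k then P $$ (i, l) else 0)"
      by (rule sum.cong) simp_all
    finally show ?thesis
      using zero_col k that by simp
  qed
  then have "P *\<^sub>v unit_vec n k = 0\<^sub>v n"
    using P by (intro eq_vecI) simp_all
  then have "det P = 0"
    using det_0_iff_vec_prod_zero_field[OF P(1)] unit_vec_nonzero[OF k] unit_vec_carrier by blast
  with P(2) show False ..
qed

lemma det_nonzero_imp_row_nonzero:
  assumes "P \<in> carrier_mat n n" "det P \<noteq> (0::'a::field)" "i < n"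
  shows "\<exists>k<n. P $$ (i, k) \<noteq> 0"
proof -
  obtain k where "k < n" "transpose_mat P $$ (k, i) \<noteq> 0"
    using det_nonzero_imp_col_nonzero[of "transpose_mat P" n i] assms by (auto simp: det_transpose)
  then show ?thesis
    using assms by auto
qed

lemma det_nonzero_if_triangular_wrt_order:
  fixes M :: "'a::field mat" and N :: "nat \<Rightarrow> 'b::order"
  assumes M: "M \<in> carrier_mat n n"
    and diag: "\<And>i. i < n \<Longrightarrow> M $$ (i, i) \<noteq> 0"
    and supp: "\<And>i k. i < n \<Longrightarrow> k < n \<Longrightarrow> M $$ (i, k) \<noteq> 0 \<Longrightarrow> N i \<le> N k"
    and inj: "inj_on N {0..<n}"
  shows "det M \<noteq> 0"
proof
  assume "det M = 0"
  then obtain v where v: "v \<in> carrier_vec n" "v \<noteq> 0\<^sub>v n" "M *\<^sub>v v = 0\<^sub>v n"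
    using det_0_iff_vec_prod_zero_field[OF M] by blast
  define I where "I = {k. k < n \<and> v $ k \<noteq> 0}"
  have "I \<noteq> {}"
    using v(1,2) by (auto simp: I_def intro!: eq_vecI)
  then obtain k where k: "k \<in> I" and max: "\<And>l. l \<in> I \<Longrightarrow> N k \<le> N l \<Longrightarrow> N k = N l"
    using finite_has_maximal[of "N ` I"] by (auto simp: I_def)
  have off_diag: "M $$ (k, l) * v $ l = 0" if "l < n" "l \<noteq> k" for l
  proof (rule ccontr)
    assume "M $$ (k, l) * v $ l \<noteq> 0"
    then have "l \<in> I" "N k \<le> N l"
      using supp that k by (auto simp: I_def)
    then have "N k = N l"
      using max by blast
    then show False
      using inj that k by (auto simp: I_def inj_on_def)
  qed
  have "(M *\<^sub>v v) $ k = M $$ (k, k) * v $ k + (\<Sum>l\<in>{0..<n} - {k}. M $$ (k, l) * v $ l)"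
    using k M v(1) by (simp add: I_def scalar_prod_def sum.remove[of "{0..<n}" k])
  also have "\<dots> = M $$ (k, k) * v $ k"
    using off_diag by (simp add: sum.neutral)
  finally have "M $$ (k, k) * v $ k = 0"
    using v(3) k by (simp add: I_def)
  with k diag show False
    by (simp add: I_def)
qed

lemma det_nonzero_obtains_column_support_bij:
  assumes P: "P \<in> carrier_mat n n" "det P \<noteq> (0::'a::field)"
    and uniq: "\<And>i i' k. i < n \<Longrightarrow> i' < n \<Longrightarrow> k < n \<Longrightarrow> P $$ (i, k) \<noteq> 0 \<Longrightarrow> P $$ (i', k) \<noteq> 0 \<Longrightarrow> i = i'"
  obtains \<sigma> where "bij_betw \<sigma> {0..<n} {0..<n}"
    and "\<And>i k. i < n \<Longrightarrow> k < n \<Longrightarrow> P $$ (i, k) \<noteq> 0 \<longleftrightarrow> i = \<sigma> k"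
proof -
  define \<sigma> where "\<sigma> k = (THE i. i < n \<and> P $$ (i, k) \<noteq> 0)" for k
  have \<sigma>: "\<sigma> k < n \<and> P $$ (\<sigma> k, k) \<noteq> 0" if "k < n" for k
    unfolding \<sigma>_def by (rule theI') (use det_nonzero_imp_col_nonzero[OF P that] uniq that in blast)
  have supp: "P $$ (i, k) \<noteq> 0 \<longleftrightarrow> i = \<sigma> k" if "i < n" "k < n" for i k
    using \<sigma> uniq that by blast
  have "\<sigma> ` {0..<n} = {0..<n}"
  proof
    show "\<sigma> ` {0..<n} \<subseteq> {0..<n}"
      using \<sigma> by auto
    show "{0..<n} \<subseteq> \<sigma> ` {0..<n}"
    proof
      fix i
      assume i: "i \<in> {0..<n}"
      then obtain k where "k < n" "P $$ (i, k) \<noteq> 0"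
        using det_nonzero_imp_row_nonzero[OF P] by auto
      with i supp show "i \<in> \<sigma> ` {0..<n}"
        by auto
    qed
  qed
  then have "inj_on \<sigma> {0..<n}"
    by (intro eq_card_imp_inj_on) simp_all
  with \<open>\<sigma> ` {0..<n} = {0..<n}\<close> have "bij_betw \<sigma> {0..<n} {0..<n}"
    by (simp add: bij_betw_def)
  with supp that show ?thesis
    by blast
qed

lemma mult_carrier_mat_square [simp]:
  "A \<in> carrier_mat n n \<Longrightarrow> B \<in> carrier_mat n n \<Longrightarrow> A * B \<in> carrier_mat n n"
  by simp

definition perm_mat :: "nat \<Rightarrow> (nat \<Rightarrow> nat) \<Rightarrow> 'a::{zero,one} mat" where
  "perm_mat n \<sigma> = mat n n (\<lambda>(i, k). if i = \<sigma> k then 1 else 0)"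

lemma index_mult_perm_mat_right:
  assumes "A \<in> carrier_mat m n" "bij_betw \<sigma> {0..<n} {0..<n}" "i < m" "k < n"
  shows "(A * perm_mat n \<sigma>) $$ (i, k) = (A $$ (i, \<sigma> k) :: 'a::semiring_1)"
proof -
  have "\<sigma> k < n"
    using bij_betw_apply[OF assms(2)] assms(4) by simp
  have "(A * perm_mat n \<sigma>) $$ (i, k) = (\<Sum>m\<in>{0..<n}. A $$ (i, m) * (if m = \<sigma> k then 1 else 0))"
    using assms by (simp add: perm_mat_def scalar_prod_def)
  also have "\<dots> = (\<Sum>m\<in>{0..<n}. if m = \<sigma> k then A $$ (i, m) else 0)"
    by (rule sum.cong) simp_all
  finally show ?thesis
    using \<open>\<sigma> k < n\<close> by simp
qed

lemma index_mult_perm_mat_left: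
  assumes "B \<in> carrier_mat n p" "bij_betw \<sigma> {0..<n} {0..<n}" "k < n" "l < p"
  shows "(perm_mat n \<sigma> * B) $$ (\<sigma> k, l) = (B $$ (k, l) :: 'a::semiring_1)"
proof -
  have "\<sigma> k < n" "\<And>m. m < n \<Longrightarrow> \<sigma> k = \<sigma> m \<longleftrightarrow> k = m"
    using bij_betw_apply[OF assms(2)] inj_on_eq_iff[OF bij_betw_imp_inj_on[OF assms(2)]] assms(3)
    by simp_all
  have "(perm_mat n \<sigma> * B) $$ (\<sigma> k, l) = (\<Sum>m\<in>{0..<n}. (if \<sigma> k = \<sigma> m then 1 else 0) * B $$ (m, l))"
    using assms \<open>\<sigma> k < n\<close> by (simp add: perm_mat_def scalar_prod_def)
  also have "\<dots> = (\<Sum>m\<in>{0..<n}. if m = k then B $$ (m, l) else 0)"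
    using \<open>\<And>m. m < n \<Longrightarrow> \<sigma> k = \<sigma> m \<longleftrightarrow> k = m\<close> by (intro sum.cong) auto
  finally show ?thesis
    using assms(3) by simp
qed

section \<open>Uniqueness of tripartite mixtures\<close>

text \<open>
  The item sets \<open>NX i \<subseteq> X\<close> and \<open>NY l \<subseteq> Y\<close> index nonsingular moment matrices of the first
  mixture, the block \<open>Z\<close> separates its classes, and the empty set \<open>NX i0\<close> supplies a row of ones.
\<close>

locale tripartite_mixture =
  fixes n :: nat and V V' :: "nat \<Rightarrow> nat \<Rightarrow> 'a::field" and q q' :: "nat \<Rightarrow> 'a"
    and X Y Z :: "nat set" and NX NY :: "nat \<Rightarrow> nat set" and i0 :: nat
  assumes moments_eq: "\<And>c. c \<subseteq> X \<union> Y \<union> Z \<Longrightarrow>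
      (\<Sum>k\<in>{0..<n}. q k * (\<Prod>j\<in>c. V k j)) = (\<Sum>k\<in>{0..<n}. q' k * (\<Prod>j\<in>c. V' k j))"
    and disjoint: "X \<inter> Y = {}" "X \<inter> Z = {}" "Y \<inter> Z = {}"
    and finite_blocks: "finite X" "finite Y" "finite Z"
    and NX_subset: "\<And>i. NX i \<subseteq> X" and NY_subset: "\<And>l. NY l \<subseteq> Y"
    and det_X: "det (mat n n (\<lambda>(i, k). \<Prod>j\<in>NX i. V k j)) \<noteq> 0"
    and det_Y: "det (mat n n (\<lambda>(k, l). \<Prod>j\<in>NY l. V k j)) \<noteq> 0"
    and q_nonzero: "\<And>k. k < n \<Longrightarrow> q k \<noteq> 0"
    and Z_separates: "\<And>i i'. i < n \<Longrightarrow> i' < n \<Longrightarrow> i \<noteq> i' \<Longrightarrow> \<exists>j\<in>Z. V i j \<noteq> V i' j"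
    and i0: "i0 < n" "NX i0 = {}"
begin

definition row_prod_mat :: "(nat \<Rightarrow> nat \<Rightarrow> 'a) \<Rightarrow> (nat \<Rightarrow> nat set) \<Rightarrow> 'a mat" where
  "row_prod_mat W R = mat n n (\<lambda>(i, k). \<Prod>j\<in>R i. W k j)"

definition col_prod_mat :: "(nat \<Rightarrow> nat \<Rightarrow> 'a) \<Rightarrow> (nat \<Rightarrow> nat set) \<Rightarrow> 'a mat" where
  "col_prod_mat W C = mat n n (\<lambda>(k, l). \<Prod>j\<in>C l. W k j)"

lemma prod_mat_carrier [simp]:
  "row_prod_mat W R \<in> carrier_mat n n" "col_prod_mat W C \<in> carrier_mat n n"
  by (simp_all add: row_prod_mat_def col_prod_mat_def)

lemma prod_mat_dim [simp]:
  "dim_row (row_prod_mat W R) = n" "dim_col (row_prod_mat W R) = n"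
  "dim_row (col_prod_mat W C) = n" "dim_col (col_prod_mat W C) = n"
  by (simp_all add: row_prod_mat_def col_prod_mat_def)

lemma index_prod_mat [simp]:
  "i < n \<Longrightarrow> k < n \<Longrightarrow> row_prod_mat W R $$ (i, k) = (\<Prod>j\<in>R i. W k j)"
  "k < n \<Longrightarrow> l < n \<Longrightarrow> col_prod_mat W C $$ (k, l) = (\<Prod>j\<in>C l. W k j)"
  by (simp_all add: row_prod_mat_def col_prod_mat_def)

lemma moment_mat_eq:
  assumes R: "\<And>i. R i \<subseteq> X" and C: "\<And>l. C l \<subseteq> Y" and W: "W \<subseteq> Z"
  shows "row_prod_mat V R * mat_diag n (\<lambda>k. q k * (\<Prod>j\<in>W. V k j)) * col_prod_mat V C
       = row_prod_mat V' R * mat_diag n (\<lambda>k. q' k * (\<Prod>j\<in>W. V' k j)) * col_prod_mat V' C"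
    (is "?lhs = ?rhs")
proof (rule eq_matI)
  fix i l
  assume "i < dim_row ?rhs" "l < dim_col ?rhs"
  then have il: "i < n" "l < n"
    by simp_all
  have "finite (R i)" "finite W" "finite (C l)"
    using finite_subset[OF R finite_blocks(1)] finite_subset[OF W finite_blocks(3)]
      finite_subset[OF C finite_blocks(2)] by blast+
  moreover have "R i \<inter> W = {}" "(R i \<union> W) \<inter> C l = {}"
    using R C W disjoint by blast+
  ultimately have entry: "(row_prod_mat U R * mat_diag n (\<lambda>k. p k * (\<Prod>j\<in>W. U k j)) * col_prod_mat U C) $$ (i, l)
      = (\<Sum>k\<in>{0..<n}. p k * (\<Prod>j\<in>R i \<union> W \<union> C l. U k j))" for U p
    using il by (subst mult_mat_diag_mult_index[OF prod_mat_carrier il]) (simp add: prod.union_disjoint mult_ac)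
  have "R i \<union> W \<union> C l \<subseteq> X \<union> Y \<union> Z"
    using R C W by blast
  then show "?lhs $$ (i, l) = ?rhs $$ (i, l)"
    unfolding entry by (rule moments_eq)
qed simp_all

lemma det_moment_mat:
  "det (row_prod_mat W R * mat_diag n d * col_prod_mat W' C)
    = det (row_prod_mat W R) * (\<Prod>k\<in>{0..<n}. d k) * det (col_prod_mat W' C)"
  by (simp add: det_mult[of _ n] det_mat_diag)

lemma det_X_Y_mat: "det (row_prod_mat V NX) \<noteq> 0" "det (col_prod_mat V NY) \<noteq> 0"
  using det_X det_Y by (simp_all add: row_prod_mat_def col_prod_mat_def)

lemma primed_nonsingular:
  "det (row_prod_mat V' NX) \<noteq> 0" "det (col_prod_mat V' NY) \<noteq> 0" "\<And>k. k < n \<Longrightarrow> q' k \<noteq> 0"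
proof -
  have "row_prod_mat V NX * mat_diag n q * col_prod_mat V NY
      = row_prod_mat V' NX * mat_diag n q' * col_prod_mat V' NY"
    using moment_mat_eq[where R = NX and C = NY and W = "{}", OF NX_subset NY_subset] by simp
  moreover have "det (row_prod_mat V NX * mat_diag n q * col_prod_mat V NY) \<noteq> 0"
    using det_X_Y_mat q_nonzero unfolding det_moment_mat by simp
  ultimately have "det (row_prod_mat V' NX * mat_diag n q' * col_prod_mat V' NY) \<noteq> 0"
    by simp
  then have "det (row_prod_mat V' NX) \<noteq> 0" "det (col_prod_mat V' NY) \<noteq> 0"
    and q'_prod: "(\<Prod>k\<in>{0..<n}. q' k) \<noteq> 0"
    unfolding det_moment_mat by auto
  then show "det (row_prod_mat V' NX) \<noteq> 0" "det (col_prod_mat V' NY) \<noteq> 0"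
    by simp_all
  show "q' k \<noteq> 0" if "k < n" for k
    using q'_prod that by (simp add: prod_zero_iff)
qed

lemma det_weighted_Y_mat: "det (mat_diag n q' * col_prod_mat V' NY) \<noteq> 0"
  using primed_nonsingular by (simp add: det_mult[of _ n] det_mat_diag)

end

text \<open>
  \<open>P\<close> relates the \<open>X\<close>-moment matrices of the two mixtures; it commutes with the diagonal
  \<open>Z\<close>-moments and therefore turns out to be a permutation matrix.
\<close>

locale tripartite_mixture_transfer = tripartite_mixture +
  fixes P :: "'a::field mat"
  assumes P_carrier [simp]: "P \<in> carrier_mat n n"
    and transfer: "row_prod_mat V' NX = row_prod_mat V NX * P"
begin

lemma P_dim [simp]: "dim_row P = n" "dim_col P = n"
  using P_carrier by blast+

lemma transfer_weights:
  assumes C: "\<And>l. C l \<subseteq> Y" and W: "W \<subseteq> Z"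
  shows "mat_diag n (\<lambda>k. q k * (\<Prod>j\<in>W. V k j)) * col_prod_mat V C
       = P * (mat_diag n (\<lambda>k. q' k * (\<Prod>j\<in>W. V' k j)) * col_prod_mat V' C)"
proof (rule mult_left_cancel_det_nonzero[where n = n and m = n, OF _ det_X_Y_mat(1)])
  show "row_prod_mat V NX * (mat_diag n (\<lambda>k. q k * (\<Prod>j\<in>W. V k j)) * col_prod_mat V C)
      = row_prod_mat V NX * (P * (mat_diag n (\<lambda>k. q' k * (\<Prod>j\<in>W. V' k j)) * col_prod_mat V' C))"
    using moment_mat_eq[where R = NX, OF NX_subset C W] transfer
    by (simp add: assoc_mult_mat[of _ n n _ n _ n])
qed simp_all

lemma transfer_weights_empty:
  "mat_diag n q * col_prod_mat V NY = P * (mat_diag n q' * col_prod_mat V' NY)"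
  using transfer_weights[where C = NY and W = "{}", OF NY_subset] by simp

lemma transfer_rows:
  assumes R: "\<And>i. R i \<subseteq> X"
  shows "row_prod_mat V R * P = row_prod_mat V' R"
proof (rule mult_right_cancel_det_nonzero[where n = n and m = n, OF _ det_weighted_Y_mat])
  have "row_prod_mat V R * (mat_diag n q * col_prod_mat V NY)
      = row_prod_mat V' R * (mat_diag n q' * col_prod_mat V' NY)"
    using moment_mat_eq[where C = NY and W = "{}", OF R NY_subset]
    by (simp add: assoc_mult_mat[of _ n n _ n _ n])
  then show "row_prod_mat V R * P * (mat_diag n q' * col_prod_mat V' NY)
      = row_prod_mat V' R * (mat_diag n q' * col_prod_mat V' NY)"
    unfolding transfer_weights_empty by (simp add: assoc_mult_mat[of _ n n _ n _ n])
qed simp_all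

lemma transfer_commutes:
  assumes W: "W \<subseteq> Z"
  shows "mat_diag n (\<lambda>k. \<Prod>j\<in>W. V k j) * P = P * mat_diag n (\<lambda>k. \<Prod>j\<in>W. V' k j)"
proof (rule mult_right_cancel_det_nonzero[where n = n and m = n, OF _ det_weighted_Y_mat])
  have diag_mult: "mat_diag n (\<lambda>k. \<Prod>j\<in>W. U k j) * (mat_diag n p * B)
      = mat_diag n (\<lambda>k. p k * (\<Prod>j\<in>W. U k j)) * B" if "B \<in> carrier_mat n n"
    for p and U :: "nat \<Rightarrow> nat \<Rightarrow> 'a" and B
  proof -
    have "mat_diag n (\<lambda>k. \<Prod>j\<in>W. U k j) * (mat_diag n p * B)
        = (mat_diag n (\<lambda>k. \<Prod>j\<in>W. U k j) * mat_diag n p) * B"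
      using that by (intro assoc_mult_mat[symmetric, of _ n n _ n _ n]) auto
    also have "\<dots> = mat_diag n (\<lambda>k. p k * (\<Prod>j\<in>W. U k j)) * B"
      by (simp add: mult.commute)
    finally show ?thesis .
  qed
  have "mat_diag n (\<lambda>k. \<Prod>j\<in>W. V k j) * P * (mat_diag n q' * col_prod_mat V' NY)
      = mat_diag n (\<lambda>k. \<Prod>j\<in>W. V k j) * (mat_diag n q * col_prod_mat V NY)"
    by (simp add: transfer_weights_empty assoc_mult_mat[of _ n n _ n _ n])
  also have "\<dots> = P * (mat_diag n (\<lambda>k. q' k * (\<Prod>j\<in>W. V' k j)) * col_prod_mat V' NY)"
    by (simp add: diag_mult transfer_weights[OF NY_subset W])
  also have "\<dots> = P * mat_diag n (\<lambda>k. \<Prod>j\<in>W. V' k j) * (mat_diag n q' * col_prod_mat V' NY)"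
    by (simp add: diag_mult assoc_mult_mat[of _ n n _ n _ n])
  finally show "mat_diag n (\<lambda>k. \<Prod>j\<in>W. V k j) * P * (mat_diag n q' * col_prod_mat V' NY)
      = P * mat_diag n (\<lambda>k. \<Prod>j\<in>W. V' k j) * (mat_diag n q' * col_prod_mat V' NY)" .
qed simp_all

lemma transfer_support:
  assumes "i < n" "k < n" "P $$ (i, k) \<noteq> 0" "j \<in> Z"
  shows "V i j = V' k j"
proof -
  have "(mat_diag n (\<lambda>k. \<Prod>j\<in>{j}. V k j) * P) $$ (i, k) = (P * mat_diag n (\<lambda>k. \<Prod>j\<in>{j}. V' k j)) $$ (i, k)"
    using transfer_commutes[of "{j}"] assms(4) by simp
  then have "V i j * P $$ (i, k) = P $$ (i, k) * V' k j"
    using assms(1,2) by (simp add: mat_diag_mult_left[of _ n n] mat_diag_mult_right[of _ n n])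
  with assms(3) show ?thesis
    by simp
qed

lemma transfer_is_perm_mat:
  obtains \<sigma> where "bij_betw \<sigma> {0..<n} {0..<n}" "P = perm_mat n \<sigma>"
proof -
  have "det (row_prod_mat V NX) * det P \<noteq> 0"
    using primed_nonsingular(1) transfer by (simp add: det_mult[of _ n])
  then have "det P \<noteq> 0"
    by simp
  moreover have "i = i'" if "i < n" "i' < n" "k < n" "P $$ (i, k) \<noteq> 0" "P $$ (i', k) \<noteq> 0" for i i' k
    using Z_separates[of i i'] transfer_support[of i k] transfer_support[of i' k] that by auto
  ultimately obtain \<sigma> where \<sigma>: "bij_betw \<sigma> {0..<n} {0..<n}"
    and supp: "\<And>i k. i < n \<Longrightarrow> k < n \<Longrightarrow> P $$ (i, k) \<noteq> 0 \<longleftrightarrow> i = \<sigma> k"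
    using det_nonzero_obtains_column_support_bij[OF P_carrier] by blast
  have "P $$ (\<sigma> k, k) = 1" if k: "k < n" for k
  proof -
    \<comment> \<open>Row \<open>i0\<close> of both \<open>X\<close>-moment matrices consists of empty products, so the columns of \<open>P\<close> sum to 1.\<close>
    have "1 = (row_prod_mat V NX * P) $$ (i0, k)"
      using i0 k by (simp flip: transfer)
    also have "\<dots> = (\<Sum>m\<in>{0..<n}. P $$ (m, k))"
      using i0 k by (simp add: scalar_prod_def)
    also have "\<dots> = P $$ (\<sigma> k, k)"
      using supp[OF _ k] bij_betw_apply[OF \<sigma>] k
      by (subst sum.remove[of _ "\<sigma> k"]) (auto intro: sum.neutral)
    finally show ?thesis ..
  qed
  then have "P = perm_mat n \<sigma>"
    using supp by (intro eq_matI) (auto simp: perm_mat_def)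
  with \<sigma> that show ?thesis
    by blast
qed

lemma transfer_weighted_Y_match:
  assumes \<sigma>: "bij_betw \<sigma> {0..<n} {0..<n}" and P: "P = perm_mat n \<sigma>" and "C \<subseteq> Y" "k < n"
  shows "q' k * (\<Prod>j\<in>C. V' k j) = q (\<sigma> k) * (\<Prod>j\<in>C. V (\<sigma> k) j)"
proof -
  have "(mat_diag n q * col_prod_mat V (\<lambda>_. C)) $$ (\<sigma> k, i0)
      = (perm_mat n \<sigma> * (mat_diag n q' * col_prod_mat V' (\<lambda>_. C))) $$ (\<sigma> k, i0)"
    using transfer_weights[of "\<lambda>_. C" "{}"] assms by simp
  also have "\<dots> = (mat_diag n q' * col_prod_mat V' (\<lambda>_. C)) $$ (k, i0)"
    by (rule index_mult_perm_mat_left[OF _ \<sigma> \<open>k < n\<close> i0(1)]) simp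
  finally show ?thesis
    using assms i0 bij_betw_apply[OF \<sigma>] by (simp add: mat_diag_mult_left[of _ n n])
qed

lemma transfer_X_match:
  assumes \<sigma>: "bij_betw \<sigma> {0..<n} {0..<n}" and P: "P = perm_mat n \<sigma>" and "k < n" "j \<in> X"
  shows "V' k j = V (\<sigma> k) j"
proof -
  have "V' k j = (row_prod_mat V (\<lambda>_. {j}) * perm_mat n \<sigma>) $$ (i0, k)"
    using transfer_rows[of "\<lambda>_. {j}"] assms i0 by simp
  also have "\<dots> = row_prod_mat V (\<lambda>_. {j}) $$ (i0, \<sigma> k)"
    by (rule index_mult_perm_mat_right[OF _ \<sigma> i0(1) \<open>k < n\<close>]) simp
  also have "\<dots> = V (\<sigma> k) j"
    using i0 bij_betw_apply[OF \<sigma>] assms by simp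
  finally show ?thesis .
qed

lemma transfer_components_match:
  "\<exists>\<sigma>. bij_betw \<sigma> {0..<n} {0..<n} \<and> (\<forall>k<n. q' k = q (\<sigma> k) \<and> (\<forall>j\<in>X \<union> Y \<union> Z. V' k j = V (\<sigma> k) j))"
proof -
  obtain \<sigma> where \<sigma>: "bij_betw \<sigma> {0..<n} {0..<n}" and P: "P = perm_mat n \<sigma>"
    using transfer_is_perm_mat .
  have \<sigma>k: "\<sigma> k < n" if "k < n" for k
    using bij_betw_apply[OF \<sigma>] that by simp
  have "q' k = q (\<sigma> k)" if "k < n" for k
    using transfer_weighted_Y_match[OF \<sigma> P, of "{}" k] that by simp
  moreover have "V' k j = V (\<sigma> k) j" if "k < n" "j \<in> Y" for k j
    using transfer_weighted_Y_match[OF \<sigma> P, of "{j}" k] q_nonzero[OF \<sigma>k] that calculation[OF that(1)]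
    by simp
  moreover have "V' k j = V (\<sigma> k) j" if "k < n" "j \<in> Z" for k j
    using transfer_support[of "\<sigma> k" k j] \<sigma>k that P by (simp add: perm_mat_def)
  ultimately show ?thesis
    using \<sigma> transfer_X_match[OF \<sigma> P] by blast
qed

end

context tripartite_mixture
begin

lemma components_match:
  "\<exists>\<sigma>. bij_betw \<sigma> {0..<n} {0..<n} \<and> (\<forall>k<n. q' k = q (\<sigma> k) \<and> (\<forall>j\<in>X \<union> Y \<union> Z. V' k j = V (\<sigma> k) j))"
proof -
  obtain P where "P \<in> carrier_mat n n" "row_prod_mat V' NX = row_prod_mat V NX * P"
    using det_nonzero_obtains_right_factor[OF prod_mat_carrier(1) det_X_Y_mat(1) prod_mat_carrier(1)]
    by blast
  then interpret tripartite_mixture_transfer n V V' q q' X Y Z NX NY i0 P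
    by unfold_locales
  show ?thesis
    by (rule transfer_components_match)
qed

end

section \<open>The LCBN model\<close>

lemma perm_subset: "\<alpha> \<in> perm K E \<Longrightarrow> \<alpha> \<subseteq> {0..<K}"
  by (simp add: perm_def)

lemma finite_perm: "finite (perm K E)"
  by (rule finite_subset[of _ "Pow {0..<K}"]) (auto simp: perm_def)

lemma full_pattern_in_perm: "is_hierarchy K E \<Longrightarrow> {0..<K} \<in> perm K E"
  by (auto simp: perm_def is_hierarchy_def)

lemma perm_Int: "\<alpha> \<in> perm K E \<Longrightarrow> \<alpha>' \<in> perm K E \<Longrightarrow> \<alpha> \<inter> \<alpha>' \<in> perm K E"
  by (auto simp: perm_def)

lemma valid_theta_eq:
  assumes "valid_theta J K Q E \<theta>" "j < J" "\<alpha> \<in> perm K E" "\<alpha>' \<in> perm K E" "Q j \<subseteq> \<alpha>" "Q j \<subseteq> \<alpha>'"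
  shows "\<theta> j \<alpha> = \<theta> j \<alpha>'"
  using assms(1)[unfolded valid_theta_def] assms(2-) by blast

lemma valid_theta_less:
  assumes "valid_theta J K Q E \<theta>" "j < J" "\<alpha> \<in> perm K E" "\<alpha>' \<in> perm K E" "Q j \<subseteq> \<alpha>" "\<not> Q j \<subseteq> \<alpha>'"
  shows "\<theta> j \<alpha>' < \<theta> j \<alpha>"
  using assms(1)[unfolded valid_theta_def] assms(2-) by blast

lemma valid_theta_full_pattern:
  assumes \<theta>: "valid_theta J K Q E \<theta>" and E: "is_hierarchy K E"
    and j: "j < J" "Q j \<subseteq> {0..<K}" and \<alpha>: "\<alpha> \<in> perm K E"
  shows "\<theta> j \<alpha> \<le> \<theta> j {0..<K}" and "\<theta> j \<alpha> = \<theta> j {0..<K} \<longleftrightarrow> Q j \<subseteq> \<alpha>"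
proof -
  have "Q j \<subseteq> \<alpha> \<Longrightarrow> \<theta> j \<alpha> = \<theta> j {0..<K}" "\<not> Q j \<subseteq> \<alpha> \<Longrightarrow> \<theta> j \<alpha> < \<theta> j {0..<K}"
    using valid_theta_eq[OF \<theta> j(1) \<alpha> full_pattern_in_perm[OF E] _ j(2)]
      valid_theta_less[OF \<theta> j(1) full_pattern_in_perm[OF E] \<alpha> j(2)] by simp_all
  then show "\<theta> j \<alpha> \<le> \<theta> j {0..<K}" "\<theta> j \<alpha> = \<theta> j {0..<K} \<longleftrightarrow> Q j \<subseteq> \<alpha>"
    by (cases "Q j \<subseteq> \<alpha>"; simp)+
qed

lemma valid_theta_neq:
  assumes \<theta>: "valid_theta J K Q E \<theta>" and j: "j < J" and \<alpha>: "\<alpha> \<in> perm K E" "\<alpha>' \<in> perm K E"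
    and Gam: "Gam Q j \<alpha> \<noteq> Gam Q j \<alpha>'"
  shows "\<theta> j \<alpha> \<noteq> \<theta> j \<alpha>'"
proof (cases "Q j \<subseteq> \<alpha>")
  case True
  then have "\<not> Q j \<subseteq> \<alpha>'"
    using Gam by (simp add: Gam_def)
  with True show ?thesis
    using valid_theta_less[OF \<theta> j \<alpha> True] by simp
next
  case False
  then have "Q j \<subseteq> \<alpha>'"
    using Gam by (simp add: Gam_def)
  with False show ?thesis
    using valid_theta_less[OF \<theta> j \<alpha>(2,1)] by fastforce
qed

lemma lcbn_prob_pos: "valid_t K t \<Longrightarrow> \<alpha> \<in> perm K E \<Longrightarrow> lcbn_prob K E t \<alpha> > 0"
  unfolding lcbn_prob_def valid_t_def by (auto intro!: prod_pos)

lemma hierarchy_subset_if_perm_eq: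
  assumes E: "is_hierarchy K E" and E': "is_hierarchy K E'" and eq: "perm K E = perm K E'"
  shows "E \<subseteq> E'"
proof
  fix x
  assume x: "x \<in> E"
  obtain k l where kl: "x = (k, l)"
    by (cases x)
  then have "k \<noteq> l" "l < K"
    using E x by (auto simp: is_hierarchy_def irrefl_def)
  have range': "E' \<subseteq> {0..<K} \<times> {0..<K}" and trans': "trans E'"
    using E' by (simp_all add: is_hierarchy_def)
  \<comment> \<open>The ancestors of \<open>l\<close> under \<open>E'\<close>, together with \<open>l\<close>, form a permissible pattern.\<close>
  define D where "D = insert l {k'. (k', l) \<in> E'}"
  have "D \<subseteq> {0..<K}"
    using range' \<open>l < K\<close> by (auto simp: D_def)
  moreover have "a \<in> D" if "(a, b) \<in> E'" "b \<in> D" for a b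
    using that trans' by (auto simp: D_def dest: transD)
  ultimately have "D \<in> perm K E'"
    unfolding perm_def by blast
  then have "D \<in> perm K E"
    using eq by simp
  moreover have "l \<in> D"
    by (simp add: D_def)
  ultimately have "k \<in> D"
    using x kl unfolding perm_def by blast
  with kl \<open>k \<noteq> l\<close> show "x \<in> E'"
    by (simp add: D_def)
qed

lemma hierarchy_eq_if_perm_eq:
  "is_hierarchy K E \<Longrightarrow> is_hierarchy K E' \<Longrightarrow> perm K E = perm K E' \<Longrightarrow> E = E'"
  using hierarchy_subset_if_perm_eq by (metis subset_antisym)

definition lcbn_factor :: "(nat \<times> nat) set \<Rightarrow> (nat \<Rightarrow> real) \<Rightarrow> nat set \<Rightarrow> nat \<Rightarrow> real" where
  "lcbn_factor E t \<alpha> k = (if pa E k \<subseteq> \<alpha> then (if k \<in> \<alpha> then t k else 1 - t k) else 1)"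

lemma lcbn_factor_pos: "valid_t K t \<Longrightarrow> k < K \<Longrightarrow> lcbn_factor E t \<alpha> k > 0"
  by (simp add: lcbn_factor_def valid_t_def)

lemma lcbn_prob_eq_prod_factor:
  "\<alpha> \<in> perm K E \<Longrightarrow> lcbn_prob K E t \<alpha> = (\<Prod>k\<in>{0..<K}. lcbn_factor E t \<alpha> k)"
  by (simp add: lcbn_prob_def lcbn_factor_def)

lemma perm_without_descendants:
  fixes k :: nat
  assumes E: "is_hierarchy K E"
  defines "D \<equiv> {l. (k, l) \<in> E}"
  shows "{0..<K} - D \<in> perm K E" and "{0..<K} - insert k D \<in> perm K E"
proof -
  have range: "E \<subseteq> {0..<K} \<times> {0..<K}" and trans: "trans E"
    using E by (simp_all add: is_hierarchy_def)
  have "a \<in> {0..<K} \<and> a \<notin> D" if "(a, b) \<in> E" "b \<notin> D" for a b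
    using range that transD[OF trans, of k a b] by (auto simp: D_def)
  moreover have "a \<noteq> k" if "(a, b) \<in> E" "b \<notin> D" for a b
    using that by (auto simp: D_def)
  ultimately show "{0..<K} - D \<in> perm K E" "{0..<K} - insert k D \<in> perm K E"
    unfolding perm_def by blast+
qed

lemma pa_subset_without_descendants:
  fixes k :: nat
  assumes E: "is_hierarchy K E" and k': "k' \<in> {0..<K} - {l. (k, l) \<in> E}"
  shows "pa E k' \<subseteq> {0..<K} - insert k {l. (k, l) \<in> E}"
proof
  fix l
  assume "l \<in> pa E k'"
  then have "(l, k') \<in> E"
    by (simp add: pa_def)
  with k' perm_without_descendants(1)[OF E, of k] have "l \<in> {0..<K} - {l. (k, l) \<in> E}" "l \<noteq> k"
    by (auto simp: perm_def)
  then show "l \<in> {0..<K} - insert k {l. (k, l) \<in> E}"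
    by simp
qed

lemma card_descendants_less:
  assumes E: "is_hierarchy K E" and "(k, l) \<in> E"
  shows "card {l'. (l, l') \<in> E} < card {l'. (k, l') \<in> E}"
proof -
  have "{l'. (l, l') \<in> E} \<subseteq> {l'. (k, l') \<in> E}"
    using E assms(2) by (auto simp: is_hierarchy_def dest: transD)
  moreover have "l \<in> {l'. (k, l') \<in> E}" "l \<notin> {l'. (l, l') \<in> E}"
    using E assms(2) by (auto simp: is_hierarchy_def irrefl_def)
  ultimately have "{l'. (l, l') \<in> E} \<subset> {l'. (k, l') \<in> E}"
    by blast
  moreover have "finite {l'. (k, l') \<in> E}"
    using E by (auto simp: is_hierarchy_def intro: finite_subset[of _ "{0..<K}"])
  ultimately show ?thesis
    by (simp add: psubset_card_mono)
qed

lemma lcbn_prob_without_descendants: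
  fixes k :: nat
  assumes E: "is_hierarchy K E" and k: "k < K"
  defines "D \<equiv> {l. (k, l) \<in> E}"
  defines "\<beta> \<equiv> {0..<K} - insert k D"
  shows "lcbn_prob K E t ({0..<K} - D) = (\<Prod>k'\<in>\<beta>. t k') * t k * (\<Prod>l\<in>D. lcbn_factor E t ({0..<K} - D) l)"
    and "lcbn_prob K E t \<beta> = (\<Prod>k'\<in>\<beta>. t k') * (1 - t k)"
proof -
  have D: "D \<subseteq> {0..<K}" "k \<notin> D" "finite D"
    using E by (auto simp: D_def is_hierarchy_def irrefl_def intro: finite_subset)
  have pa_\<beta>: "pa E k' \<subseteq> \<beta>" if "k' \<in> {0..<K} - D" for k'
    using pa_subset_without_descendants[OF E, of k' k] that by (simp add: \<beta>_def D_def)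
  have split: "(\<Prod>k'\<in>{0..<K}. f k') = (\<Prod>k'\<in>\<beta>. f k') * f k * (\<Prod>l\<in>D. f l)" for f :: "nat \<Rightarrow> real"
  proof -
    have "{0..<K} = \<beta> \<union> ({k} \<union> D)" "\<beta> \<inter> ({k} \<union> D) = {}" "finite \<beta>"
      using D k by (auto simp: \<beta>_def)
    then show ?thesis
      using D by (simp add: prod.union_disjoint mult_ac)
  qed
  have on_\<beta>: "(\<Prod>k'\<in>\<beta>. lcbn_factor E t \<alpha> k') = (\<Prod>k'\<in>\<beta>. t k')" if "\<beta> \<subseteq> \<alpha>" for \<alpha>
    using pa_\<beta> that by (intro prod.cong) (auto simp: lcbn_factor_def \<beta>_def)
  have "lcbn_factor E t ({0..<K} - D) k = t k" "lcbn_factor E t \<beta> k = 1 - t k"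
    using pa_\<beta>[of k] D(2) k by (auto simp: lcbn_factor_def \<beta>_def)
  moreover have "(\<Prod>l\<in>D. lcbn_factor E t \<beta> l) = 1"
    by (intro prod.neutral) (auto simp: lcbn_factor_def pa_def D_def \<beta>_def)
  moreover have "\<beta> \<subseteq> {0..<K} - D"
    by (auto simp: \<beta>_def)
  ultimately show "lcbn_prob K E t ({0..<K} - D) = (\<Prod>k'\<in>\<beta>. t k') * t k * (\<Prod>l\<in>D. lcbn_factor E t ({0..<K} - D) l)"
    and "lcbn_prob K E t \<beta> = (\<Prod>k'\<in>\<beta>. t k') * (1 - t k)"
    using perm_without_descendants[OF E, of k] on_\<beta>[of "{0..<K} - D"] on_\<beta>[of \<beta>]
    by (simp_all add: lcbn_prob_eq_prod_factor split D_def \<beta>_def)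
qed

lemma lcbn_prob_determines_t:
  assumes E: "is_hierarchy K E" and t: "valid_t K t" and t': "valid_t K t'"
    and eq: "\<forall>\<alpha>\<in>perm K E. lcbn_prob K E t \<alpha> = lcbn_prob K E t' \<alpha>"
  shows "k < K \<Longrightarrow> t' k = t k"
proof (induction k rule: measure_induct_rule[where f = "\<lambda>k. card {l. (k, l) \<in> E}"])
  case (less k)
  define D where "D = {l. (k, l) \<in> E}"
  have D: "D \<subseteq> {0..<K}"
    using E by (auto simp: D_def is_hierarchy_def)
  \<comment> \<open>Descendants of \<open>k\<close> have strictly fewer descendants, so \<open>t\<close> is already identified on them.\<close>
  have IH: "t' l = t l" if "l \<in> D" for l
    using less.IH[OF card_descendants_less[OF E]] that D by (auto simp: D_def)
  define a where "a = (\<Prod>k'\<in>{0..<K} - insert k D. t k')"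
  define a' where "a' = (\<Prod>k'\<in>{0..<K} - insert k D. t' k')"
  define d where "d = (\<Prod>l\<in>D. lcbn_factor E t ({0..<K} - D) l)"
  have "(\<Prod>l\<in>D. lcbn_factor E t' ({0..<K} - D) l) = d"
    unfolding d_def using IH by (intro prod.cong) (simp_all add: lcbn_factor_def)
  then have "lcbn_prob K E t' ({0..<K} - D) = a' * t' k * d"
    using lcbn_prob_without_descendants(1)[OF E less.prems, of t'] by (simp add: a'_def D_def)
  moreover have "lcbn_prob K E t ({0..<K} - D) = a * t k * d"
    using lcbn_prob_without_descendants(1)[OF E less.prems, of t] by (simp add: a_def d_def D_def)
  moreover have "lcbn_prob K E t ({0..<K} - insert k D) = a * (1 - t k)"
    "lcbn_prob K E t' ({0..<K} - insert k D) = a' * (1 - t' k)"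
    using lcbn_prob_without_descendants(2)[OF E less.prems] by (simp_all add: a_def a'_def D_def)
  ultimately have "a * t k * d = a' * t' k * d" "a * (1 - t k) = a' * (1 - t' k)"
    using eq perm_without_descendants[OF E, of k] by (auto simp: D_def)
  moreover have "d > 0" "a > 0"
    using t D less.prems lcbn_factor_pos[OF t]
    by (auto simp: d_def a_def valid_t_def intro!: prod_pos)
  ultimately have "a * t k = a' * t' k" "a = a'"
    by (auto simp: algebra_simps)
  then show ?case
    using \<open>a > 0\<close> by simp
qed

lemma prod_diff_eq_sum_response_patterns:
  fixes x s :: "nat \<Rightarrow> 'a::comm_ring_1"
  assumes I: "finite I" and c: "c \<subseteq> I"
  shows "(\<Prod>j\<in>c. x j - s j) = (\<Sum>r\<in>Pow I.
      (\<Prod>j\<in>I. if j \<in> r then (if j \<in> c then 1 - s j else 1) else (if j \<in> c then - s j else 1))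
      * (\<Prod>j\<in>I. if j \<in> r then x j else 1 - x j))"
proof -
  define u where "u j = (if j \<in> c then 1 - s j else 1)" for j
  define v where "v j = (if j \<in> c then - s j else 1)" for j
  have "(\<Prod>j\<in>c. x j - s j) = (\<Prod>j\<in>I. if j \<in> c then x j - s j else 1)"
    using I c by (simp add: prod.If_cases Int_absorb1)
  also have "\<dots> = (\<Prod>j\<in>I. x j * u j + (1 - x j) * v j)"
    by (rule prod.cong) (auto simp: u_def v_def algebra_simps)
  also have "\<dots> = (\<Sum>r\<in>Pow I. (\<Prod>j\<in>r. x j * u j) * (\<Prod>j\<in>I - r. (1 - x j) * v j))"
    using I by (rule prod_add)
  also have "\<dots> = (\<Sum>r\<in>Pow I. (\<Prod>j\<in>I. if j \<in> r then u j else v j) * (\<Prod>j\<in>I. if j \<in> r then x j else 1 - x j))"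
  proof (rule sum.cong[OF refl])
    fix r
    assume "r \<in> Pow I"
    then have "I \<inter> r = r" "I \<inter> - r = I - r"
      by auto
    then have "(\<Prod>j\<in>r. x j * u j) * (\<Prod>j\<in>I - r. (1 - x j) * v j)
        = (\<Prod>j\<in>I. (if j \<in> r then u j else v j) * (if j \<in> r then x j else 1 - x j))"
      using I by (simp add: prod.If_cases if_distrib mult.commute)
    then show "(\<Prod>j\<in>r. x j * u j) * (\<Prod>j\<in>I - r. (1 - x j) * v j)
        = (\<Prod>j\<in>I. if j \<in> r then u j else v j) * (\<Prod>j\<in>I. if j \<in> r then x j else 1 - x j)"
      by (simp add: prod.distrib)
  qed
  finally show ?thesis
    unfolding u_def v_def .
qed

lemma shifted_moments_eq:
  assumes eq: "\<forall>r\<subseteq>{0..<J}. resp_prob J K E \<theta> t r = resp_prob J K E' \<theta>' t' r" and c: "c \<subseteq> {0..<J}"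
  shows "(\<Sum>\<alpha>\<in>perm K E. lcbn_prob K E t \<alpha> * (\<Prod>j\<in>c. \<theta> j \<alpha> - s j))
       = (\<Sum>\<alpha>\<in>perm K E'. lcbn_prob K E' t' \<alpha> * (\<Prod>j\<in>c. \<theta>' j \<alpha> - s j))"
proof -
  define w where "w r = (\<Prod>j\<in>{0..<J}.
      if j \<in> r then (if j \<in> c then 1 - s j else 1) else (if j \<in> c then - s j else 1))" for r
  have moment: "(\<Sum>\<alpha>\<in>perm K F. lcbn_prob K F u \<alpha> * (\<Prod>j\<in>c. th j \<alpha> - s j))
      = (\<Sum>r\<in>Pow {0..<J}. w r * resp_prob J K F th u r)" for F u th
  proof -
    have "(\<Sum>\<alpha>\<in>perm K F. lcbn_prob K F u \<alpha> * (\<Prod>j\<in>c. th j \<alpha> - s j))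
        = (\<Sum>\<alpha>\<in>perm K F. \<Sum>r\<in>Pow {0..<J}.
             w r * (lcbn_prob K F u \<alpha> * (\<Prod>j\<in>{0..<J}. if j \<in> r then th j \<alpha> else 1 - th j \<alpha>)))"
      unfolding prod_diff_eq_sum_response_patterns[OF finite_atLeastLessThan c] w_def
      by (simp add: sum_distrib_left mult_ac)
    also have "\<dots> = (\<Sum>r\<in>Pow {0..<J}. w r * resp_prob J K F th u r)"
      unfolding resp_prob_def sum_distrib_left by (rule sum.swap)
    finally show ?thesis .
  qed
  show ?thesis
    unfolding moment using eq by (intro sum.cong) auto
qed

lemma det_unmastered_mat_nonzero:
  fixes \<theta> :: "nat \<Rightarrow> nat set \<Rightarrow> 'a::field"
  assumes ap: "bij_betw ap {0..<n} A" and S: "finite S"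
    and mastery: "\<And>j \<alpha>. j \<in> S \<Longrightarrow> \<alpha> \<in> A \<Longrightarrow> \<theta> j \<alpha> = b j \<longleftrightarrow> Q j \<subseteq> \<alpha>"
    and distinct: "\<And>\<alpha> \<alpha>'. \<alpha> \<in> A \<Longrightarrow> \<alpha>' \<in> A \<Longrightarrow> (\<forall>j\<in>S. Q j \<subseteq> \<alpha> \<longleftrightarrow> Q j \<subseteq> \<alpha>') \<Longrightarrow> \<alpha> = \<alpha>'"
  shows "det (mat n n (\<lambda>(i, k). \<Prod>j\<in>{j\<in>S. \<not> Q j \<subseteq> ap i}. \<theta> j (ap k) - b j)) \<noteq> 0"
proof (rule det_nonzero_if_triangular_wrt_order[where N = "\<lambda>i. {j\<in>S. \<not> Q j \<subseteq> ap i}"])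
  have apA: "ap i \<in> A" if "i < n" for i
    using bij_betw_apply[OF ap] that by simp
  show "mat n n (\<lambda>(i, k). \<Prod>j\<in>{j\<in>S. \<not> Q j \<subseteq> ap i}. \<theta> j (ap k) - b j) $$ (i, i) \<noteq> 0" if "i < n" for i
    using that S mastery apA by (simp add: prod_zero_iff)
  show "{j\<in>S. \<not> Q j \<subseteq> ap i} \<subseteq> {j\<in>S. \<not> Q j \<subseteq> ap k}"
    if "i < n" "k < n" "mat n n (\<lambda>(i, k). \<Prod>j\<in>{j\<in>S. \<not> Q j \<subseteq> ap i}. \<theta> j (ap k) - b j) $$ (i, k) \<noteq> 0" for i k
    using that S mastery apA by (auto simp: prod_zero_iff)
  show "inj_on (\<lambda>i. {j\<in>S. \<not> Q j \<subseteq> ap i}) {0..<n}"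
  proof (rule inj_onI)
    fix i i'
    assume "i \<in> {0..<n}" "i' \<in> {0..<n}" "{j\<in>S. \<not> Q j \<subseteq> ap i} = {j\<in>S. \<not> Q j \<subseteq> ap i'}"
    then have "\<forall>j\<in>S. Q j \<subseteq> ap i \<longleftrightarrow> Q j \<subseteq> ap i'"
      by blast
    then have "ap i = ap i'"
      using distinct apA \<open>i \<in> {0..<n}\<close> \<open>i' \<in> {0..<n}\<close> by simp
    then show "i = i'"
      using bij_betw_imp_inj_on[OF ap] \<open>i \<in> {0..<n}\<close> \<open>i' \<in> {0..<n}\<close> by (simp add: inj_on_eq_iff)
  qed
qed simp

lemma separating_item_if_nested_separated:
  assumes closed: "\<And>\<alpha> \<alpha>'. \<alpha> \<in> A \<Longrightarrow> \<alpha>' \<in> A \<Longrightarrow> \<alpha> \<inter> \<alpha>' \<in> A"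
    and nested: "\<And>\<alpha> \<alpha>'. \<alpha> \<in> A \<Longrightarrow> \<alpha>' \<in> A \<Longrightarrow> \<alpha> \<subset> \<alpha>' \<Longrightarrow> \<exists>j\<in>Z. Gam Q j \<alpha> \<noteq> Gam Q j \<alpha>'"
    and "\<alpha> \<in> A" "\<alpha>' \<in> A" "\<alpha> \<noteq> \<alpha>'"
  shows "\<exists>j\<in>Z. Gam Q j \<alpha> \<noteq> Gam Q j \<alpha>'"
proof (cases "\<alpha> \<subseteq> \<alpha>'")
  case True
  with nested assms(3-5) show ?thesis
    by blast
next
  case False
  then obtain j where "j \<in> Z" "Gam Q j (\<alpha> \<inter> \<alpha>') \<noteq> Gam Q j \<alpha>"
    using nested[of "\<alpha> \<inter> \<alpha>'" \<alpha>] closed assms(3,4) by blast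
  then show ?thesis
    by (auto simp: Gam_def)
qed

section \<open>Identifiability\<close>

locale identifiability_setting =
  fixes J K :: nat and Q :: "nat \<Rightarrow> nat set" and E E' :: "(nat \<times> nat) set"
    and \<theta> \<theta>' :: "nat \<Rightarrow> nat set \<Rightarrow> real" and t t' :: "nat \<Rightarrow> real" and S1 S2 :: "nat set"
  assumes Q_range: "\<forall>j<J. Q j \<subseteq> {0..<K}"
    and hierarchy: "is_hierarchy K E" "is_hierarchy K E'"
    and theta: "valid_theta J K Q E \<theta>" "valid_theta J K Q E' \<theta>'"
    and t_valid: "valid_t K t" "valid_t K t'"
    and card_le: "card (perm K E') \<le> card (perm K E)"
    and same_resp: "\<forall>r\<subseteq>{0..<J}. resp_prob J K E \<theta> t r = resp_prob J K E' \<theta>' t' r"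
    and S: "S1 \<subseteq> {0..<J}" "S2 \<subseteq> {0..<J}" "S1 \<inter> S2 = {}"
    and distinct_S1: "\<forall>\<alpha>\<in>perm K E. \<forall>\<alpha>'\<in>perm K E. (\<forall>j\<in>S1. Gam Q j \<alpha> = Gam Q j \<alpha>') \<longrightarrow> \<alpha> = \<alpha>'"
    and distinct_S2: "\<forall>\<alpha>\<in>perm K E. \<forall>\<alpha>'\<in>perm K E. (\<forall>j\<in>S2. Gam Q j \<alpha> = Gam Q j \<alpha>') \<longrightarrow> \<alpha> = \<alpha>'"
    and nested_separated: "\<forall>\<alpha>\<in>perm K E. \<forall>\<alpha>'\<in>perm K E. \<alpha> \<subset> \<alpha>' \<longrightarrow>
      (\<exists>j\<in>{0..<J} - (S1 \<union> S2). Gam Q j \<alpha> \<noteq> Gam Q j \<alpha>')"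
    and complete: "\<forall>\<alpha>\<in>perm K E. \<forall>\<alpha>'\<in>Pow {0..<K} - perm K E. \<exists>j<J. Gam Q j \<alpha> \<noteq> Gam Q j \<alpha>'"
begin

lemma det_unmastered_item_mat_nonzero:
  fixes n :: nat
  assumes ap: "bij_betw ap {0..<n} (perm K E)" and S': "S' \<subseteq> {0..<J}"
    and s: "\<And>j. j \<in> S' \<Longrightarrow> s j = \<theta> j {0..<K}"
    and distinct: "\<forall>\<alpha>\<in>perm K E. \<forall>\<alpha>'\<in>perm K E. (\<forall>j\<in>S'. Gam Q j \<alpha> = Gam Q j \<alpha>') \<longrightarrow> \<alpha> = \<alpha>'"
  shows "det (mat n n (\<lambda>(i, k). \<Prod>j\<in>{j\<in>S'. \<not> Q j \<subseteq> ap i}. \<theta> j (ap k) - s j)) \<noteq> 0"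
proof (rule det_unmastered_mat_nonzero[OF ap])
  show "finite S'"
    using S' by (rule finite_subset) simp
  show "\<theta> j \<alpha> = s j \<longleftrightarrow> Q j \<subseteq> \<alpha>" if "j \<in> S'" "\<alpha> \<in> perm K E" for j \<alpha>
  proof -
    have "j < J"
      using that(1) S' by auto
    then show ?thesis
      using s[OF that(1)] valid_theta_full_pattern(2)[OF theta(1) hierarchy(1) \<open>j < J\<close> _ that(2)] Q_range
      by simp
  qed
  show "\<alpha> = \<alpha>'" if "\<alpha> \<in> perm K E" "\<alpha>' \<in> perm K E" "\<forall>j\<in>S'. Q j \<subseteq> \<alpha> \<longleftrightarrow> Q j \<subseteq> \<alpha>'" for \<alpha> \<alpha>'
    using that distinct by (simp add: Gam_def)
qed

lemma enumerated_moments_eq: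
  fixes n n' :: nat
  assumes ap: "bij_betw ap {0..<n} (perm K E)" and bp: "bij_betw bp {0..<n'} (perm K E')" and "n' \<le> n"
    and c: "c \<subseteq> {0..<J}"
  shows "(\<Sum>k\<in>{0..<n}. lcbn_prob K E t (ap k) * (\<Prod>j\<in>c. \<theta> j (ap k) - s j))
      = (\<Sum>k\<in>{0..<n}. (if k < n' then lcbn_prob K E' t' (bp k) else 0) * (\<Prod>j\<in>c. \<theta>' j (bp k) - s j))"
proof -
  have "(\<Sum>k\<in>{0..<n}. lcbn_prob K E t (ap k) * (\<Prod>j\<in>c. \<theta> j (ap k) - s j))
      = (\<Sum>\<alpha>\<in>perm K E. lcbn_prob K E t \<alpha> * (\<Prod>j\<in>c. \<theta> j \<alpha> - s j))"
    by (rule sum.reindex_bij_betw[OF ap])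
  also have "\<dots> = (\<Sum>\<alpha>\<in>perm K E'. lcbn_prob K E' t' \<alpha> * (\<Prod>j\<in>c. \<theta>' j \<alpha> - s j))"
    by (rule shifted_moments_eq[OF same_resp c])
  also have "\<dots> = (\<Sum>k\<in>{0..<n'}. lcbn_prob K E' t' (bp k) * (\<Prod>j\<in>c. \<theta>' j (bp k) - s j))"
    by (rule sum.reindex_bij_betw[OF bp, symmetric])
  also have "\<dots> = (\<Sum>k\<in>{0..<n}. (if k < n' then lcbn_prob K E' t' (bp k) else 0) * (\<Prod>j\<in>c. \<theta>' j (bp k) - s j))"
    using \<open>n' \<le> n\<close> by (intro sum.mono_neutral_cong_left) auto
  finally show ?thesis .
qed

lemma enumerated_classes_separated:
  fixes n :: nat
  assumes ap: "bij_betw ap {0..<n} (perm K E)" and "i < n" "i' < n" "i \<noteq> i'"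
  shows "\<exists>j\<in>{0..<J} - (S1 \<union> S2). \<theta> j (ap i) - s j \<noteq> \<theta> j (ap i') - s j"
proof -
  have "ap i \<in> perm K E" "ap i' \<in> perm K E" "ap i \<noteq> ap i'"
    using assms bij_betw_apply[OF ap] bij_betw_imp_inj_on[OF ap] by (auto simp: inj_on_eq_iff)
  then obtain j where j: "j \<in> {0..<J} - (S1 \<union> S2)" "Gam Q j (ap i) \<noteq> Gam Q j (ap i')"
    using separating_item_if_nested_separated[OF perm_Int nested_separated[rule_format]] by blast
  then have "\<theta> j (ap i) \<noteq> \<theta> j (ap i')"
    using valid_theta_neq[OF theta(1) _ \<open>ap i \<in> perm K E\<close> \<open>ap i' \<in> perm K E\<close>] by simp
  with j(1) show ?thesis
    by auto
qed

lemma det_unmastered_item_mat_Y_nonzero: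
  fixes n :: nat
  assumes ap: "bij_betw ap {0..<n} (perm K E)" and s: "\<And>j. j \<in> S2 \<Longrightarrow> s j = \<theta> j {0..<K}"
  shows "det (mat n n (\<lambda>(k, l). \<Prod>j\<in>{j\<in>S2. \<not> Q j \<subseteq> ap l}. \<theta> j (ap k) - s j)) \<noteq> 0"
proof -
  have "mat n n (\<lambda>(k, l). \<Prod>j\<in>{j\<in>S2. \<not> Q j \<subseteq> ap l}. \<theta> j (ap k) - s j)
      = transpose_mat (mat n n (\<lambda>(i, k). \<Prod>j\<in>{j\<in>S2. \<not> Q j \<subseteq> ap i}. \<theta> j (ap k) - s j))"
    by (rule eq_matI) auto
  moreover have "det (mat n n (\<lambda>(i, k). \<Prod>j\<in>{j\<in>S2. \<not> Q j \<subseteq> ap i}. \<theta> j (ap k) - s j)) \<noteq> 0"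
    by (rule det_unmastered_item_mat_nonzero[OF ap S(2) _ distinct_S2]) (simp add: s)
  ultimately show ?thesis
    by (simp add: det_transpose[of _ n])
qed

(* The second model has n' \<le> n latent classes; it is padded with classes of weight zero. *)
lemma mixture_of_enumerations:
  fixes n n' :: nat
  assumes ap: "bij_betw ap {0..<n} (perm K E)" and bp: "bij_betw bp {0..<n'} (perm K E')" and "n' \<le> n"
    and i0: "i0 < n" "ap i0 = {0..<K}"
    and s: "\<And>j. j \<in> S1 \<union> S2 \<Longrightarrow> s j = \<theta> j {0..<K}"
  shows "tripartite_mixture n (\<lambda>k j. \<theta> j (ap k) - s j) (\<lambda>k j. \<theta>' j (bp k) - s j)
      (\<lambda>k. lcbn_prob K E t (ap k)) (\<lambda>k. if k < n' then lcbn_prob K E' t' (bp k) else 0)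
      S1 S2 ({0..<J} - (S1 \<union> S2)) (\<lambda>i. {j\<in>S1. \<not> Q j \<subseteq> ap i}) (\<lambda>l. {j\<in>S2. \<not> Q j \<subseteq> ap l}) i0"
proof unfold_locales
  show "(\<Sum>k\<in>{0..<n}. lcbn_prob K E t (ap k) * (\<Prod>j\<in>c. \<theta> j (ap k) - s j))
      = (\<Sum>k\<in>{0..<n}. (if k < n' then lcbn_prob K E' t' (bp k) else 0) * (\<Prod>j\<in>c. \<theta>' j (bp k) - s j))"
    if "c \<subseteq> S1 \<union> S2 \<union> ({0..<J} - (S1 \<union> S2))" for c
    using that S by (intro enumerated_moments_eq[OF ap bp \<open>n' \<le> n\<close>]) auto
  show "S1 \<inter> S2 = {}" "S1 \<inter> ({0..<J} - (S1 \<union> S2)) = {}" "S2 \<inter> ({0..<J} - (S1 \<union> S2)) = {}"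
    using S(3) by auto
  show "finite S1" "finite S2" "finite ({0..<J} - (S1 \<union> S2))"
    using finite_subset[OF S(1)] finite_subset[OF S(2)] by simp_all
  show "{j\<in>S1. \<not> Q j \<subseteq> ap i} \<subseteq> S1" "{j\<in>S2. \<not> Q j \<subseteq> ap i} \<subseteq> S2" for i
    by auto
  show "det (mat n n (\<lambda>(i, k). \<Prod>j\<in>{j\<in>S1. \<not> Q j \<subseteq> ap i}. \<theta> j (ap k) - s j)) \<noteq> 0"
    by (rule det_unmastered_item_mat_nonzero[OF ap S(1) _ distinct_S1]) (simp add: s)
  show "det (mat n n (\<lambda>(k, l). \<Prod>j\<in>{j\<in>S2. \<not> Q j \<subseteq> ap l}. \<theta> j (ap k) - s j)) \<noteq> 0"
    by (rule det_unmastered_item_mat_Y_nonzero[OF ap]) (simp add: s)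
  show "lcbn_prob K E t (ap k) \<noteq> 0" if "k < n" for k
    using lcbn_prob_pos[OF t_valid(1) bij_betw_apply[OF ap]] that by force
  show "\<exists>j\<in>{0..<J} - (S1 \<union> S2). \<theta> j (ap i) - s j \<noteq> \<theta> j (ap i') - s j"
    if "i < n" "i' < n" "i \<noteq> i'" for i i'
    using enumerated_classes_separated[OF ap that] .
  have "Q j \<subseteq> ap i0" if "j \<in> S1" for j
    using subsetD[OF S(1) that] Q_range i0(2) by simp
  then show "{j\<in>S1. \<not> Q j \<subseteq> ap i0} = {}"
    by blast
qed (fact i0(1))

lemma enumerated_classes_match:
  fixes n n' :: nat
  assumes ap: "bij_betw ap {0..<n} (perm K E)" and bp: "bij_betw bp {0..<n'} (perm K E')"
    and card: "n = card (perm K E)" "n' = card (perm K E')"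
  obtains \<sigma> where "n' = n" "bij_betw \<sigma> {0..<n} {0..<n}"
    and "\<And>k. k < n \<Longrightarrow> lcbn_prob K E' t' (bp k) = lcbn_prob K E t (ap (\<sigma> k))"
    and "\<And>k j. k < n \<Longrightarrow> j < J \<Longrightarrow> \<theta>' j (bp k) = \<theta> j (ap (\<sigma> k))"
proof -
  have "{0..<K} \<in> ap ` {0..<n}"
    using bij_betw_imp_surj_on[OF ap] full_pattern_in_perm[OF hierarchy(1)] by simp
  then obtain i0 where i0: "i0 < n" "ap i0 = {0..<K}"
    by (metis atLeastLessThan_iff imageE)
  \<comment> \<open>Shifting the items of \<open>S1 \<union> S2\<close> by their value at the full pattern makes the item matrices triangular.\<close>
  define s where "s j = (if j \<in> S1 \<union> S2 then \<theta> j {0..<K} else 0)" for j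
  interpret tripartite_mixture n "\<lambda>k j. \<theta> j (ap k) - s j" "\<lambda>k j. \<theta>' j (bp k) - s j"
    "\<lambda>k. lcbn_prob K E t (ap k)" "\<lambda>k. if k < n' then lcbn_prob K E' t' (bp k) else 0"
    S1 S2 "{0..<J} - (S1 \<union> S2)" "\<lambda>i. {j\<in>S1. \<not> Q j \<subseteq> ap i}" "\<lambda>l. {j\<in>S2. \<not> Q j \<subseteq> ap l}" i0
    using card_le card by (intro mixture_of_enumerations[OF ap bp _ i0]) (simp_all add: s_def)
  obtain \<sigma> where \<sigma>: "bij_betw \<sigma> {0..<n} {0..<n}"
    and match: "\<And>k. k < n \<Longrightarrow> (if k < n' then lcbn_prob K E' t' (bp k) else 0) = lcbn_prob K E t (ap (\<sigma> k))"
      "\<And>k j. k < n \<Longrightarrow> j \<in> S1 \<union> S2 \<union> ({0..<J} - (S1 \<union> S2)) \<Longrightarrow> \<theta>' j (bp k) - s j = \<theta> j (ap (\<sigma> k)) - s j"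
    using components_match by blast
  \<comment> \<open>Every latent class of the first model has positive weight, so none is matched to padding.\<close>
  have "n' = n"
  proof (rule ccontr)
    assume "n' \<noteq> n"
    then have "n' < n"
      using card_le card by simp
    then show False
      using match(1)[of n'] lcbn_prob_pos[OF t_valid(1)] bij_betw_apply[OF ap] bij_betw_apply[OF \<sigma>] by force
  qed
  show ?thesis
  proof (rule that[OF \<open>n' = n\<close> \<sigma>])
    show "lcbn_prob K E' t' (bp k) = lcbn_prob K E t (ap (\<sigma> k))" if "k < n" for k
      using match(1)[OF that] that \<open>n' = n\<close> by simp
    show "\<theta>' j (bp k) = \<theta> j (ap (\<sigma> k))" if "k < n" "j < J" for k j
      using match(2)[OF that(1), of j] that by simp
  qed
qed

lemma latent_classes_match:
  obtains \<pi> where "bij_betw \<pi> (perm K E') (perm K E)"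
    and "\<And>\<alpha>. \<alpha> \<in> perm K E' \<Longrightarrow> lcbn_prob K E' t' \<alpha> = lcbn_prob K E t (\<pi> \<alpha>)"
    and "\<And>\<alpha> j. \<alpha> \<in> perm K E' \<Longrightarrow> j < J \<Longrightarrow> \<theta>' j \<alpha> = \<theta> j (\<pi> \<alpha>)"
proof -
  define n where "n = card (perm K E)"
  obtain ap where ap: "bij_betw ap {0..<n} (perm K E)"
    using ex_bij_betw_nat_finite[OF finite_perm] unfolding n_def by blast
  obtain bp where bp': "bij_betw bp {0..<card (perm K E')} (perm K E')"
    using ex_bij_betw_nat_finite[OF finite_perm] by blast
  obtain \<sigma> where n: "card (perm K E') = n" and \<sigma>: "bij_betw \<sigma> {0..<n} {0..<n}"
    and match: "\<And>k. k < n \<Longrightarrow> lcbn_prob K E' t' (bp k) = lcbn_prob K E t (ap (\<sigma> k))"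
      "\<And>k j. k < n \<Longrightarrow> j < J \<Longrightarrow> \<theta>' j (bp k) = \<theta> j (ap (\<sigma> k))"
    using enumerated_classes_match[OF ap bp' n_def refl] by blast
  have bp: "bij_betw bp {0..<n} (perm K E')"
    using bp' n by simp
  define \<pi> where "\<pi> = ap \<circ> \<sigma> \<circ> the_inv_into {0..<n} bp"
  have \<pi>: "bij_betw \<pi> (perm K E') (perm K E)"
    unfolding \<pi>_def by (rule bij_betw_trans[OF bij_betw_the_inv_into[OF bp] bij_betw_trans[OF \<sigma> ap]])
  show ?thesis
  proof (rule that[OF \<pi>])
    fix \<alpha>
    assume "\<alpha> \<in> perm K E'"
    then have "\<alpha> \<in> bp ` {0..<n}"
      using bij_betw_imp_surj_on[OF bp] by simp
    then obtain k where k: "k < n" "\<alpha> = bp k"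
      by (metis atLeastLessThan_iff imageE)
    have "\<pi> \<alpha> = ap (\<sigma> k)"
      using bij_betw_imp_inj_on[OF bp] k by (simp add: \<pi>_def the_inv_into_f_f)
    then show "lcbn_prob K E' t' \<alpha> = lcbn_prob K E t (\<pi> \<alpha>)"
      using match(1) k by simp
    show "\<theta>' j \<alpha> = \<theta> j (\<pi> \<alpha>)" if "j < J" for j
      using match(2) k that \<open>\<pi> \<alpha> = ap (\<sigma> k)\<close> by simp
  qed
qed

lemma matching_preserves_full_pattern:
  assumes \<pi>: "bij_betw \<pi> (perm K E') (perm K E)"
    and \<theta>_\<pi>: "\<And>\<alpha> j. \<alpha> \<in> perm K E' \<Longrightarrow> j < J \<Longrightarrow> \<theta>' j \<alpha> = \<theta> j (\<pi> \<alpha>)"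
    and j: "j < J"
  shows "\<theta>' j {0..<K} = \<theta> j {0..<K}"
proof -
  note full = full_pattern_in_perm[OF hierarchy(1)] full_pattern_in_perm[OF hierarchy(2)]
  have "{0..<K} \<in> \<pi> ` perm K E'"
    using bij_betw_imp_surj_on[OF \<pi>] full(1) by simp
  then obtain \<alpha> where \<alpha>: "\<alpha> \<in> perm K E'" "\<pi> \<alpha> = {0..<K}"
    by (metis imageE)
  have "\<theta>' j {0..<K} = \<theta> j (\<pi> {0..<K})"
    using \<theta>_\<pi> full(2) j by simp
  also have "\<dots> \<le> \<theta> j {0..<K}"
    using valid_theta_full_pattern(1)[OF theta(1) hierarchy(1) j] Q_range j bij_betw_apply[OF \<pi> full(2)]
    by simp
  finally have "\<theta>' j {0..<K} \<le> \<theta> j {0..<K}" .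
  moreover have "\<theta> j {0..<K} = \<theta>' j \<alpha>"
    using \<theta>_\<pi> \<alpha> j by simp
  moreover have "\<theta>' j \<alpha> \<le> \<theta>' j {0..<K}"
    using valid_theta_full_pattern(1)[OF theta(2) hierarchy(2) j] Q_range j \<alpha>(1) by simp
  ultimately show ?thesis
    by simp
qed

lemma matching_is_identity:
  assumes \<pi>: "bij_betw \<pi> (perm K E') (perm K E)"
    and \<theta>_\<pi>: "\<And>\<alpha> j. \<alpha> \<in> perm K E' \<Longrightarrow> j < J \<Longrightarrow> \<theta>' j \<alpha> = \<theta> j (\<pi> \<alpha>)"
  shows "perm K E' = perm K E" and "\<And>\<alpha>. \<alpha> \<in> perm K E' \<Longrightarrow> \<pi> \<alpha> = \<alpha>"
proof -
  have fixed: "\<alpha> \<in> perm K E \<and> \<pi> \<alpha> = \<alpha>" if \<alpha>: "\<alpha> \<in> perm K E'" for \<alpha>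
  proof -
    have \<pi>\<alpha>: "\<pi> \<alpha> \<in> perm K E"
      using bij_betw_apply[OF \<pi> \<alpha>] .
    have same: "Gam Q j (\<pi> \<alpha>) = Gam Q j \<alpha>" if "j < J" for j
      using valid_theta_full_pattern(2)[OF theta(1) hierarchy(1) that _ \<pi>\<alpha>]
        valid_theta_full_pattern(2)[OF theta(2) hierarchy(2) that _ \<alpha>] \<theta>_\<pi>[OF \<alpha> that]
        matching_preserves_full_pattern[OF \<pi> \<theta>_\<pi> that] Q_range that
      by (simp add: Gam_def)
    have "\<alpha> \<in> perm K E"
      using complete \<pi>\<alpha> same perm_subset[OF \<alpha>] by blast
    moreover have "\<forall>j\<in>S1. Gam Q j (\<pi> \<alpha>) = Gam Q j \<alpha>"
      using same S(1) by auto
    then have "\<pi> \<alpha> = \<alpha>"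
      using distinct_S1 \<pi>\<alpha> calculation by blast
    ultimately show ?thesis ..
  qed
  then show "\<And>\<alpha>. \<alpha> \<in> perm K E' \<Longrightarrow> \<pi> \<alpha> = \<alpha>"
    by blast
  have "perm K E' \<subseteq> perm K E"
    using fixed by blast
  moreover have "card (perm K E') = card (perm K E)"
    using bij_betw_same_card[OF \<pi>] .
  ultimately show "perm K E' = perm K E"
    using card_subset_eq[OF finite_perm] by blast
qed

lemma model_identified: "E' = E \<and> (\<forall>j<J. \<forall>\<alpha>\<in>perm K E. \<theta>' j \<alpha> = \<theta> j \<alpha>) \<and> (\<forall>k<K. t' k = t k)"
proof -
  obtain \<pi> where \<pi>: "bij_betw \<pi> (perm K E') (perm K E)"
    and lcbn_\<pi>: "\<And>\<alpha>. \<alpha> \<in> perm K E' \<Longrightarrow> lcbn_prob K E' t' \<alpha> = lcbn_prob K E t (\<pi> \<alpha>)"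
    and \<theta>_\<pi>: "\<And>\<alpha> j. \<alpha> \<in> perm K E' \<Longrightarrow> j < J \<Longrightarrow> \<theta>' j \<alpha> = \<theta> j (\<pi> \<alpha>)"
    using latent_classes_match by blast
  have perm_eq: "perm K E' = perm K E" and \<pi>_id: "\<And>\<alpha>. \<alpha> \<in> perm K E' \<Longrightarrow> \<pi> \<alpha> = \<alpha>"
    using matching_is_identity[OF \<pi> \<theta>_\<pi>] by blast+
  have "E' = E"
    using hierarchy_eq_if_perm_eq[OF hierarchy(2,1) perm_eq] .
  moreover have "\<forall>j<J. \<forall>\<alpha>\<in>perm K E. \<theta>' j \<alpha> = \<theta> j \<alpha>"
    using \<theta>_\<pi> \<pi>_id perm_eq by simp
  moreover have "\<forall>\<alpha>\<in>perm K E. lcbn_prob K E t \<alpha> = lcbn_prob K E t' \<alpha>"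
    using lcbn_\<pi> \<pi>_id perm_eq \<open>E' = E\<close> by simp
  then have "\<forall>k<K. t' k = t k"
    using lcbn_prob_determines_t[OF hierarchy(1) t_valid] by blast
  ultimately show ?thesis
    by blast
qed

end

theorem theoremS1:
  fixes J K :: nat and Q :: "nat \<Rightarrow> nat set" and E :: "(nat \<times> nat) set"
    and \<theta> :: "nat \<Rightarrow> nat set \<Rightarrow> real" and t :: "nat \<Rightarrow> real"
    and S1 S2 :: "nat set"
  assumes Q: "\<forall>j<J. Q j \<subseteq> {0..<K}"
    and E: "is_hierarchy K E"
    and par: "valid_theta J K Q E \<theta>" "valid_t K t"
    and S: "S1 \<subseteq> {0..<J}" "S2 \<subseteq> {0..<J}" "S1 \<inter> S2 = {}"
    and A1: "\<forall>\<alpha>\<in>perm K E. \<forall>\<alpha>'\<in>perm K E. (\<forall>j\<in>S1. Gam Q j \<alpha> = Gam Q j \<alpha>') \<longrightarrow> \<alpha> = \<alpha>'"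
    and A2: "\<forall>\<alpha>\<in>perm K E. \<forall>\<alpha>'\<in>perm K E. (\<forall>j\<in>S2. Gam Q j \<alpha> = Gam Q j \<alpha>') \<longrightarrow> \<alpha> = \<alpha>'"
    and A3: "\<forall>\<alpha>\<in>perm K E. \<forall>\<alpha>'\<in>perm K E. geS Q S1 \<alpha> \<alpha>' \<longleftrightarrow> geS Q S2 \<alpha> \<alpha>'"
    and B: "\<forall>\<alpha>\<in>perm K E. \<forall>\<alpha>'\<in>perm K E. \<alpha> \<noteq> \<alpha>' \<and> (geS Q S1 \<alpha>' \<alpha> \<or> geS Q S2 \<alpha>' \<alpha>) \<longrightarrow>
              (\<exists>j\<in>{0..<J} - (S1 \<union> S2). Gam Q j \<alpha> \<noteq> Gam Q j \<alpha>')"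
    and C: "\<forall>\<alpha>\<in>perm K E. \<forall>\<alpha>'\<in>Pow {0..<K} - perm K E. \<exists>j<J. Gam Q j \<alpha> \<noteq> Gam Q j \<alpha>'"
  shows "\<forall>E' \<theta>' t'. is_hierarchy K E' \<and> card (perm K E') \<le> card (perm K E) \<and>
           valid_theta J K Q E' \<theta>' \<and> valid_t K t' \<and>
           (\<forall>r\<subseteq>{0..<J}. resp_prob J K E \<theta> t r = resp_prob J K E' \<theta>' t' r)
         \<longrightarrow> E' = E \<and> (\<forall>j<J. \<forall>\<alpha>\<in>perm K E. \<theta>' j \<alpha> = \<theta> j \<alpha>) \<and> (\<forall>k<K. t' k = t k)"
proof (intro allI impI)
  fix E' \<theta>' t'
  assume alt: "is_hierarchy K E' \<and> card (perm K E') \<le> card (perm K E) \<and>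
    valid_theta J K Q E' \<theta>' \<and> valid_t K t' \<and> (\<forall>r\<subseteq>{0..<J}. resp_prob J K E \<theta> t r = resp_prob J K E' \<theta>' t' r)"
  have nested: "\<forall>\<alpha>\<in>perm K E. \<forall>\<alpha>'\<in>perm K E. \<alpha> \<subset> \<alpha>' \<longrightarrow> (\<exists>j\<in>{0..<J} - (S1 \<union> S2). Gam Q j \<alpha> \<noteq> Gam Q j \<alpha>')"
  proof (intro ballI impI)
    fix \<alpha> \<alpha>'
    assume "\<alpha> \<in> perm K E" "\<alpha>' \<in> perm K E" "\<alpha> \<subset> \<alpha>'"
    moreover from \<open>\<alpha> \<subset> \<alpha>'\<close> have "\<alpha> \<noteq> \<alpha>'" "geS Q S1 \<alpha>' \<alpha>"
      by (auto simp: geS_def Gam_def)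
    ultimately show "\<exists>j\<in>{0..<J} - (S1 \<union> S2). Gam Q j \<alpha> \<noteq> Gam Q j \<alpha>'"
      using B by blast
  qed
  interpret identifiability_setting J K Q E E' \<theta> \<theta>' t t' S1 S2
    using Q E par alt S A1 A2 nested C by unfold_locales blast+
  show "E' = E \<and> (\<forall>j<J. \<forall>\<alpha>\<in>perm K E. \<theta>' j \<alpha> = \<theta> j \<alpha>) \<and> (\<forall>k<K. t' k = t k)"
    by (rule model_identified)
qed

end
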